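(* Let $\Lambda$ be a singly aligned left cancellative small category. Then \[S_\Lambda=\{\alpha\beta^*:\alpha,\beta\in\Lambda,\ s(\alpha)=s(\beta)\}\cup\{0\}.\] Moreover, for $\alpha,\beta,\gamma,\tau\in\Lambda$ with $s(\alpha)=s(\beta)$ and $s(\gamma)=s(\tau)$, we have $\alpha\beta^*=\gamma\tau^*$ if and only if there is an invertible $u\in\Lambda$ with $\alpha u=\gamma$ and $\beta u=\tau$. The product in $S_\Lambda$ is given by \[\alpha\beta^*\gamma\tau^*=\begin{cases}\alpha\gamma_1(\tau\beta_1)^* & \text{if }\beta\Lambda\cap\gamma\Lambda=\rho\Lambda\text{ with }\rho=\beta\beta_1=\gamma\gamma_1,\\ 0&\text{otherwise,}\end{cases}\] and all products involving $0$ equal $0$.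
   Context: $\Lambda$ is a small category (objects $\Lambda^0$, range $r$, source $s$), left cancellative ($\alpha\beta=\alpha\gamma\Rightarrow\beta=\gamma$), and singly aligned: for all $\alpha,\beta$, $\alpha\Lambda\cap\beta\Lambda$ is either empty or equal to $\rho\Lambda$ for some $\rho\in\Lambda$, where $\alpha\Lambda=\{\alpha\beta:s(\alpha)=r(\beta)\}$. An element $u$ is invertible if $uv=r(u)$ for some $v$. Each $\alpha\in\Lambda$ is the partial bijection $s(\alpha)\Lambda\to\alpha\Lambda$, $\beta\mapsto\alpha\beta$, in the symmetric inverse monoid $\mathcal{I}(\Lambda)$ (composition on largest possible domain, zero = empty map $0$), with inverse $\alpha^*:\alpha\beta\mapsto\beta$; $S_\Lambda$ is the inverse subsemigroup of $\mathcal{I}(\Lambda)$ generated by these maps, and $\alpha\beta^*$ denotes composition. *)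

theory Defs
  imports Main
begin

definition small_category ::
  "'m set \<Rightarrow> 'o set \<Rightarrow> ('m \<Rightarrow> 'o) \<Rightarrow> ('m \<Rightarrow> 'o) \<Rightarrow> ('m \<Rightarrow> 'm \<Rightarrow> 'm) \<Rightarrow> ('o \<Rightarrow> 'm) \<Rightarrow> bool"
  where
  "small_category L Ob r s cmp idm \<longleftrightarrow>
     (\<forall>f\<in>L. r f \<in> Ob \<and> s f \<in> Ob) \<and>
     (\<forall>f\<in>L. \<forall>g\<in>L. s f = r g \<longrightarrow>
        cmp f g \<in> L \<and> r (cmp f g) = r f \<and> s (cmp f g) = s g) \<and>
     (\<forall>f\<in>L. \<forall>g\<in>L. \<forall>h\<in>L. s f = r g \<longrightarrow> s g = r h \<longrightarrow>
        cmp (cmp f g) h = cmp f (cmp g h)) \<and>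
     (\<forall>x\<in>Ob. idm x \<in> L \<and> r (idm x) = x \<and> s (idm x) = x) \<and>
     (\<forall>f\<in>L. cmp (idm (r f)) f = f \<and> cmp f (idm (s f)) = f)"

definition left_cancellative ::
  "'m set \<Rightarrow> ('m \<Rightarrow> 'o) \<Rightarrow> ('m \<Rightarrow> 'o) \<Rightarrow> ('m \<Rightarrow> 'm \<Rightarrow> 'm) \<Rightarrow> bool" where
  "left_cancellative L r s cmp \<longleftrightarrow>
     (\<forall>a\<in>L. \<forall>b\<in>L. \<forall>c\<in>L. s a = r b \<longrightarrow> s a = r c \<longrightarrow> cmp a b = cmp a c \<longrightarrow> b = c)"

definition rset ::
  "'m set \<Rightarrow> ('m \<Rightarrow> 'o) \<Rightarrow> ('m \<Rightarrow> 'o) \<Rightarrow> ('m \<Rightarrow> 'm \<Rightarrow> 'm) \<Rightarrow> 'm \<Rightarrow> 'm set" where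
  "rset L r s cmp a = {cmp a b | b. b \<in> L \<and> s a = r b}"

definition singly_aligned ::
  "'m set \<Rightarrow> ('m \<Rightarrow> 'o) \<Rightarrow> ('m \<Rightarrow> 'o) \<Rightarrow> ('m \<Rightarrow> 'm \<Rightarrow> 'm) \<Rightarrow> bool" where
  "singly_aligned L r s cmp \<longleftrightarrow>
     (\<forall>a\<in>L. \<forall>b\<in>L. rset L r s cmp a \<inter> rset L r s cmp b = {} \<or>
        (\<exists>\<rho>\<in>L. rset L r s cmp a \<inter> rset L r s cmp b = rset L r s cmp \<rho>))"

definition invertible ::
  "'m set \<Rightarrow> ('m \<Rightarrow> 'o) \<Rightarrow> ('m \<Rightarrow> 'o) \<Rightarrow> ('m \<Rightarrow> 'm \<Rightarrow> 'm) \<Rightarrow> ('o \<Rightarrow> 'm) \<Rightarrow> 'm \<Rightarrow> bool" where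
  "invertible L r s cmp idm u \<longleftrightarrow>
     u \<in> L \<and> (\<exists>v\<in>L. s u = r v \<and> cmp u v = idm (r u))"

text \<open>The partial bijection s(a)\<Lambda> \<rightarrow> a\<Lambda>, b \<mapsto> a b, as a partial map on \<Lambda>.\<close>
definition emb ::
  "'m set \<Rightarrow> ('m \<Rightarrow> 'o) \<Rightarrow> ('m \<Rightarrow> 'o) \<Rightarrow> ('m \<Rightarrow> 'm \<Rightarrow> 'm) \<Rightarrow> 'm \<Rightarrow> ('m \<rightharpoonup> 'm)" where
  "emb L r s cmp a = (\<lambda>x. if x \<in> L \<and> r x = s a then Some (cmp a x) else None)"

text \<open>Inverse of a (injective) partial map.\<close>
definition pinv :: "('a \<rightharpoonup> 'a) \<Rightarrow> ('a \<rightharpoonup> 'a)" where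
  "pinv f = (\<lambda>y. if y \<in> ran f then Some (THE x. f x = Some y) else None)"

text \<open>Product in the symmetric inverse monoid: (f g)(x) = f (g x), on the largest possible
  domain (this is map composition); the zero is the empty map.\<close>

inductive_set S_Lambda ::
  "'m set \<Rightarrow> ('m \<Rightarrow> 'o) \<Rightarrow> ('m \<Rightarrow> 'o) \<Rightarrow> ('m \<Rightarrow> 'm \<Rightarrow> 'm) \<Rightarrow> ('m \<rightharpoonup> 'm) set"
  for L r s cmp where
  gen: "a \<in> L \<Longrightarrow> emb L r s cmp a \<in> S_Lambda L r s cmp"
| zero: "Map.empty \<in> S_Lambda L r s cmp"
| mult: "f \<in> S_Lambda L r s cmp \<Longrightarrow> g \<in> S_Lambda L r s cmp \<Longrightarrow> (f \<circ>\<^sub>m g) \<in> S_Lambda L r s cmp"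
| inv: "f \<in> S_Lambda L r s cmp \<Longrightarrow> pinv f \<in> S_Lambda L r s cmp"

end

(* A map \<alpha>\<beta>\<^sup>* sends \<beta>x to \<alpha>x. In a product \<alpha>\<beta>\<^sup>*\<gamma>\<tau>\<^sup>* the middle factor pairs x\<^sub>1 with x\<^sub>2
   exactly when \<gamma>x\<^sub>1 = \<beta>x\<^sub>2, an element of \<beta>\<Lambda> \<inter> \<gamma>\<Lambda>. If that intersection is \<rho>\<Lambda> with
   \<rho> = \<beta>\<beta>\<^sub>1 = \<gamma>\<gamma>\<^sub>1, left cancellation forces x\<^sub>1 = \<gamma>\<^sub>1x and x\<^sub>2 = \<beta>\<^sub>1x, which gives the product
   formula; by single alignment the only other case is an empty intersection, giving 0.
   As \<alpha> = \<alpha>\<cdot>id\<^sup>* and the inverse of \<alpha>\<beta>\<^sup>* is \<beta>\<alpha>\<^sup>*, these maps together with 0 already form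
   the inverse semigroup S\<^sub>\<Lambda>. Finally, evaluating \<alpha>\<beta>\<^sup>* = \<gamma>\<tau>\<^sup>* at \<tau> and at \<beta> gives \<gamma> = \<alpha>u,
   \<tau> = \<beta>u and \<beta> = \<tau>v, and cancelling \<beta> in \<beta>uv = \<beta> shows that u is invertible. *)

theory Submission
  imports Defs
begin

lemma map_eqI_Some:
  assumes "\<And>y z. f y = Some z \<longleftrightarrow> g y = Some z"
  shows "f = g"
  by (rule ext) (metis assms not_Some_eq)

lemma pinv_Some_iff:
  assumes "\<And>x1 x2 y. f x1 = Some y \<Longrightarrow> f x2 = Some y \<Longrightarrow> x1 = x2"
  shows "pinv f y = Some x \<longleftrightarrow> f x = Some y"
proof -
  have "(THE x. f x = Some y) = x" if "f x = Some y" for x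
    using that assms by blast
  then show ?thesis
    unfolding pinv_def ran_def by auto
qed

lemma pinv_empty [simp]: "pinv Map.empty = Map.empty"
  by (simp add: pinv_def)

locale left_cancellative_category =
  fixes L :: "'m set" and Ob :: "'o set" and r s :: "'m \<Rightarrow> 'o"
    and cmp :: "'m \<Rightarrow> 'm \<Rightarrow> 'm" and idm :: "'o \<Rightarrow> 'm"
  assumes category: "small_category L Ob r s cmp idm"
    and left_cancellative: "left_cancellative L r s cmp"
begin

abbreviation E :: "'m \<Rightarrow> 'm \<rightharpoonup> 'm" where "E a \<equiv> emb L r s cmp a"

abbreviation span :: "'m \<Rightarrow> 'm \<Rightarrow> 'm \<rightharpoonup> 'm" where "span a b \<equiv> E a \<circ>\<^sub>m pinv (E b)"

abbreviation spans :: "('m \<rightharpoonup> 'm) set" where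
  "spans \<equiv> {span a b | a b. a \<in> L \<and> b \<in> L \<and> s a = s b}"

lemma
  shows r_in_Ob [simp]: "f \<in> L \<Longrightarrow> r f \<in> Ob"
    and s_in_Ob [simp]: "f \<in> L \<Longrightarrow> s f \<in> Ob"
    and comp_in [simp]: "f \<in> L \<Longrightarrow> g \<in> L \<Longrightarrow> s f = r g \<Longrightarrow> cmp f g \<in> L"
    and r_comp [simp]: "f \<in> L \<Longrightarrow> g \<in> L \<Longrightarrow> s f = r g \<Longrightarrow> r (cmp f g) = r f"
    and s_comp [simp]: "f \<in> L \<Longrightarrow> g \<in> L \<Longrightarrow> s f = r g \<Longrightarrow> s (cmp f g) = s g"
    and comp_assoc: "f \<in> L \<Longrightarrow> g \<in> L \<Longrightarrow> h \<in> L \<Longrightarrow> s f = r g \<Longrightarrow> s g = r h \<Longrightarrow>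
          cmp (cmp f g) h = cmp f (cmp g h)"
    and id_in [simp]: "x \<in> Ob \<Longrightarrow> idm x \<in> L"
    and r_id [simp]: "x \<in> Ob \<Longrightarrow> r (idm x) = x"
    and s_id [simp]: "x \<in> Ob \<Longrightarrow> s (idm x) = x"
    and comp_id_left [simp]: "f \<in> L \<Longrightarrow> cmp (idm (r f)) f = f"
    and comp_id_right [simp]: "f \<in> L \<Longrightarrow> cmp f (idm (s f)) = f"
  using category unfolding small_category_def by blast+

lemma cancel_left:
  "\<lbrakk>a \<in> L; b \<in> L; c \<in> L; s a = r b; s a = r c; cmp a b = cmp a c\<rbrakk> \<Longrightarrow> b = c"
  using left_cancellative unfolding left_cancellative_def by blast

lemma emb_Some_iff: "E a x = Some y \<longleftrightarrow> x \<in> L \<and> r x = s a \<and> y = cmp a x"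
  unfolding emb_def by auto

lemma emb_inj:
  "\<lbrakk>a \<in> L; E a x1 = Some y; E a x2 = Some y\<rbrakk> \<Longrightarrow> x1 = x2"
  unfolding emb_Some_iff by (metis cancel_left)

lemma pinv_emb_Some_iff:
  "a \<in> L \<Longrightarrow> pinv (E a) y = Some x \<longleftrightarrow> x \<in> L \<and> r x = s a \<and> y = cmp a x"
  using pinv_Some_iff[of "E a"] emb_inj emb_Some_iff by metis

lemma span_Some_iff:
  assumes "a \<in> L" "b \<in> L" "s a = s b"
  shows "span a b y = Some z \<longleftrightarrow> (\<exists>x\<in>L. r x = s b \<and> y = cmp b x \<and> z = cmp a x)"
  using assms by (auto simp: map_comp_Some_iff pinv_emb_Some_iff emb_Some_iff)

lemma span_apply_right:
  assumes "a \<in> L" "b \<in> L" "s a = s b"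
  shows "span a b b = Some a"
proof -
  have "b = cmp b (idm (s b)) \<and> a = cmp a (idm (s b))"
    using assms comp_id_right[of a] by simp
  then show ?thesis
    using assms by (auto simp: span_Some_iff intro!: bexI[of _ "idm (s b)"])
qed

lemma emb_eq_span_id:
  assumes "a \<in> L"
  shows "E a = span a (idm (s a))"
proof (rule map_eqI_Some)
  fix y z
  have "span a (idm (s a)) y = Some z \<longleftrightarrow>
      (\<exists>x\<in>L. r x = s a \<and> y = cmp (idm (s a)) x \<and> z = cmp a x)"
    using assms by (simp add: span_Some_iff)
  also have "\<dots> \<longleftrightarrow> (\<exists>x\<in>L. r x = s a \<and> y = x \<and> z = cmp a x)"
    by (metis comp_id_left)
  finally show "E a y = Some z \<longleftrightarrow> span a (idm (s a)) y = Some z"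
    by (auto simp: emb_Some_iff)
qed

lemma pinv_span:
  assumes "a \<in> L" "b \<in> L" "s a = s b"
  shows "pinv (span a b) = span b a"
proof (rule map_eqI_Some)
  fix y z
  have "x1 = x2" if images: "span a b x1 = Some y" "span a b x2 = Some y" for x1 x2 y
  proof -
    obtain w1 where "w1 \<in> L" "r w1 = s b" "x1 = cmp b w1" "y = cmp a w1"
      using images(1) unfolding span_Some_iff[OF assms] by blast
    moreover obtain w2 where "w2 \<in> L" "r w2 = s b" "x2 = cmp b w2" "y = cmp a w2"
      using images(2) unfolding span_Some_iff[OF assms] by blast
    ultimately show ?thesis
      using cancel_left[of a w1 w2] assms by simp
  qed
  then have "pinv (span a b) y = Some z \<longleftrightarrow> span a b z = Some y"
    by (rule pinv_Some_iff)
  then show "pinv (span a b) y = Some z \<longleftrightarrow> span b a y = Some z"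
    using assms by (auto simp: span_Some_iff)
qed

lemma span_comp_span_Some_iff:
  assumes "a \<in> L" "b \<in> L" "c \<in> L" "t \<in> L" "s a = s b" "s c = s t"
  shows "(span a b \<circ>\<^sub>m span c t) y = Some z \<longleftrightarrow>
    (\<exists>x1\<in>L. \<exists>x2\<in>L. r x1 = s c \<and> r x2 = s b \<and> cmp c x1 = cmp b x2 \<and>
       y = cmp t x1 \<and> z = cmp a x2)" (is "_ \<longleftrightarrow> ?rhs")
proof -
  have "(span a b \<circ>\<^sub>m span c t) y = Some z \<longleftrightarrow>
      (\<exists>w. span c t y = Some w \<and> span a b w = Some z)"
    by (rule map_comp_Some_iff)
  also have "\<dots> \<longleftrightarrow> ?rhs"
    unfolding span_Some_iff[OF assms(1,2,5)] span_Some_iff[OF assms(3,4,6)]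
    using assms(6) by auto
  finally show ?thesis .
qed

lemma mem_rset_iff: "y \<in> rset L r s cmp a \<longleftrightarrow> (\<exists>x\<in>L. r x = s a \<and> y = cmp a x)"
  unfolding rset_def by auto

lemma comp_mem_rset: "\<lbrakk>x \<in> L; r x = s a\<rbrakk> \<Longrightarrow> cmp a x \<in> rset L r s cmp a"
  unfolding mem_rset_iff by blast

lemma mem_rset_self: "\<rho> \<in> L \<Longrightarrow> \<rho> \<in> rset L r s cmp \<rho>"
  using comp_mem_rset[of "idm (s \<rho>)" \<rho>] by simp

lemma span_comp_span_disjoint:
  assumes "a \<in> L" "b \<in> L" "c \<in> L" "t \<in> L" "s a = s b" "s c = s t"
    and disjoint: "rset L r s cmp b \<inter> rset L r s cmp c = {}"
  shows "span a b \<circ>\<^sub>m span c t = Map.empty"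
proof (rule map_eqI_Some)
  fix y z
  have False if comp: "(span a b \<circ>\<^sub>m span c t) y = Some z"
  proof -
    obtain x1 x2 where "x1 \<in> L" "x2 \<in> L" "r x1 = s c" "r x2 = s b" "cmp c x1 = cmp b x2"
      using comp unfolding span_comp_span_Some_iff[OF assms(1-6)] by blast
    then have "cmp c x1 \<in> rset L r s cmp b \<inter> rset L r s cmp c"
      by (metis IntI comp_mem_rset)
    with disjoint show False by blast
  qed
  then show "(span a b \<circ>\<^sub>m span c t) y = Some z \<longleftrightarrow> Map.empty y = Some z"
    by auto
qed

lemma factor_through_rset_inter:
  assumes "b \<in> L" "c \<in> L" "b1 \<in> L" "c1 \<in> L" "r b1 = s b" "r c1 = s c"
    and inter: "rset L r s cmp b \<inter> rset L r s cmp c = rset L r s cmp \<rho>"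
    and \<rho>_b: "\<rho> = cmp b b1" and \<rho>_c: "\<rho> = cmp c c1"
    and "x1 \<in> L" "x2 \<in> L" "r x1 = s c" "r x2 = s b" and eq: "cmp c x1 = cmp b x2"
  obtains x where "x \<in> L" "r x = s \<rho>" "x1 = cmp c1 x" "x2 = cmp b1 x"
proof -
  have "cmp c x1 \<in> rset L r s cmp b \<inter> rset L r s cmp c"
    using assms(10-) by (metis IntI comp_mem_rset)
  then obtain x where x: "x \<in> L" "r x = s \<rho>" and x1: "cmp c x1 = cmp \<rho> x"
    unfolding inter mem_rset_iff by blast
  have "r x = s c1"
    using assms(2,4,6) x(2) \<rho>_c by simp
  have "r x = s b1"
    using assms(1,3,5) x(2) \<rho>_b by simp
  have "cmp c x1 = cmp c (cmp c1 x)"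
    unfolding x1 \<rho>_c using assms(2,4,6) x(1) \<open>r x = s c1\<close> by (simp add: comp_assoc)
  then have "x1 = cmp c1 x"
    by (rule cancel_left[rotated -1]) (use assms(2,4,6,10,12) x(1) \<open>r x = s c1\<close> in simp_all)
  moreover have "cmp b x2 = cmp b (cmp b1 x)"
    unfolding eq[symmetric] x1 \<rho>_b using assms(1,3,5) x(1) \<open>r x = s b1\<close> by (simp add: comp_assoc)
  then have "x2 = cmp b1 x"
    by (rule cancel_left[rotated -1]) (use assms(1,3,5,11,13) x(1) \<open>r x = s b1\<close> in simp_all)
  ultimately show ?thesis
    using x that by blast
qed

lemma span_comp_span:
  assumes a: "a \<in> L" and b: "b \<in> L" and c: "c \<in> L" and t: "t \<in> L"
    and "s a = s b" "s c = s t"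
    and b1: "b1 \<in> L" "r b1 = s b" and c1: "c1 \<in> L" "r c1 = s c"
    and inter: "rset L r s cmp b \<inter> rset L r s cmp c = rset L r s cmp \<rho>"
    and \<rho>_b: "\<rho> = cmp b b1" and \<rho>_c: "\<rho> = cmp c c1"
  shows "span a b \<circ>\<^sub>m span c t = span (cmp a b1) (cmp t c1)"
proof (rule map_eqI_Some)
  fix y z
  have "s \<rho> = s b1"
    using b b1 \<rho>_b by simp
  moreover have "s \<rho> = s c1"
    using c c1 \<rho>_c by simp
  ultimately have s_\<rho>: "s \<rho> = s b1" "s \<rho> = s c1" .
  have ab1: "cmp a b1 \<in> L" "s (cmp a b1) = s c1" and tc1: "cmp t c1 \<in> L" "s (cmp t c1) = s c1"
    using assms s_\<rho> by simp_all
  have assoc: "cmp (cmp a b1) x = cmp a (cmp b1 x)" "cmp (cmp t c1) x = cmp t (cmp c1 x)"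
    "cmp (cmp c c1) x = cmp c (cmp c1 x)" "cmp (cmp b b1) x = cmp b (cmp b1 x)"
    if "x \<in> L" "r x = s c1" for x
    using a b c t assms(5,6) b1 c1 s_\<rho> that by (simp_all add: comp_assoc)
  show "(span a b \<circ>\<^sub>m span c t) y = Some z \<longleftrightarrow> span (cmp a b1) (cmp t c1) y = Some z"
  proof
    assume "(span a b \<circ>\<^sub>m span c t) y = Some z"
    then obtain x1 x2 where x12: "x1 \<in> L" "x2 \<in> L" "r x1 = s c" "r x2 = s b"
        "cmp c x1 = cmp b x2" and y: "y = cmp t x1" and z: "z = cmp a x2"
      unfolding span_comp_span_Some_iff[OF a b c t assms(5,6)] by blast
    obtain x where x: "x \<in> L" "r x = s \<rho>" "x1 = cmp c1 x" "x2 = cmp b1 x"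
      by (rule factor_through_rset_inter[OF b c b1(1) c1(1) b1(2) c1(2) inter \<rho>_b \<rho>_c x12])
    then have "r x = s c1" "y = cmp (cmp t c1) x" "z = cmp (cmp a b1) x"
      using y z s_\<rho> assoc[of x] by simp_all
    then show "span (cmp a b1) (cmp t c1) y = Some z"
      unfolding span_Some_iff[OF ab1(1) tc1(1) ab1(2)[folded tc1(2)]] using x(1) tc1(2) by auto
  next
    assume "span (cmp a b1) (cmp t c1) y = Some z"
    then obtain x where x: "x \<in> L" "r x = s c1" and y: "y = cmp t (cmp c1 x)"
        and z: "z = cmp a (cmp b1 x)"
      unfolding span_Some_iff[OF ab1(1) tc1(1) ab1(2)[folded tc1(2)]] tc1(2) using assoc by blast
    have "cmp c (cmp c1 x) = cmp b (cmp b1 x)"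
      using assoc(3,4)[OF x] \<rho>_b \<rho>_c by simp
    moreover have "cmp c1 x \<in> L" "r (cmp c1 x) = s c" "cmp b1 x \<in> L" "r (cmp b1 x) = s b"
      using x b1 c1 s_\<rho> by simp_all
    ultimately show "(span a b \<circ>\<^sub>m span c t) y = Some z"
      unfolding span_comp_span_Some_iff[OF a b c t assms(5,6)] using y z by blast
  qed
qed

lemma factor_through_invertible:
  assumes "invertible L r s cmp idm u" "x \<in> L" "r x = r u"
  obtains w where "w \<in> L" "r w = s u" "x = cmp u w"
proof -
  obtain v where u: "u \<in> L" and v: "v \<in> L" "s u = r v" "cmp u v = idm (r u)"
    using assms(1) unfolding invertible_def by blast
  have "s v = r u"
    using u v s_comp[of u v] by simp
  have "cmp u (cmp v x) = cmp (cmp u v) x"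
    by (rule comp_assoc[symmetric]) (use assms(2,3) u v \<open>s v = r u\<close> in simp_all)
  also have "\<dots> = x"
    using comp_id_left[OF assms(2)] assms(3) v(3) by simp
  finally have "cmp u (cmp v x) = x" .
  moreover have "cmp v x \<in> L" "r (cmp v x) = s u"
    using assms(2,3) v \<open>s v = r u\<close> by simp_all
  ultimately show ?thesis
    using that by metis
qed

lemma span_comp_invertible:
  assumes a: "a \<in> L" and b: "b \<in> L" and "s a = s b"
    and u: "invertible L r s cmp idm u" "r u = s a"
  shows "span (cmp a u) (cmp b u) = span a b"
proof (rule map_eqI_Some)
  fix y z
  have "u \<in> L"
    using u(1) unfolding invertible_def by blast
  have au: "cmp a u \<in> L" "cmp b u \<in> L" "s (cmp a u) = s (cmp b u)"
    using assms \<open>u \<in> L\<close> by simp_all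
  have "span (cmp a u) (cmp b u) y = Some z \<longleftrightarrow>
      (\<exists>x\<in>L. r x = s u \<and> y = cmp b (cmp u x) \<and> z = cmp a (cmp u x))"
    unfolding span_Some_iff[OF au] using assms \<open>u \<in> L\<close> by (auto simp: comp_assoc)
  also have "\<dots> \<longleftrightarrow> (\<exists>w\<in>L. r w = s b \<and> y = cmp b w \<and> z = cmp a w)"
  proof
    assume "\<exists>x\<in>L. r x = s u \<and> y = cmp b (cmp u x) \<and> z = cmp a (cmp u x)"
    then show "\<exists>w\<in>L. r w = s b \<and> y = cmp b w \<and> z = cmp a w"
      using assms \<open>u \<in> L\<close> by (metis comp_in r_comp)
  next
    assume "\<exists>w\<in>L. r w = s b \<and> y = cmp b w \<and> z = cmp a w"
    then obtain w where "w \<in> L" "r w = r u" "y = cmp b w" "z = cmp a w"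
      using assms by auto
    then show "\<exists>x\<in>L. r x = s u \<and> y = cmp b (cmp u x) \<and> z = cmp a (cmp u x)"
      using u(1) by (metis factor_through_invertible)
  qed
  finally show "span (cmp a u) (cmp b u) y = Some z \<longleftrightarrow> span a b y = Some z"
    unfolding span_Some_iff[OF assms(1-3)] .
qed

lemma span_eq_span_iff:
  assumes a: "a \<in> L" and b: "b \<in> L" and c: "c \<in> L" and t: "t \<in> L"
    and ab: "s a = s b" and ct: "s c = s t"
  shows "span a b = span c t \<longleftrightarrow>
    (\<exists>u. invertible L r s cmp idm u \<and> r u = s a \<and> cmp a u = c \<and> cmp b u = t)"
proof
  assume eq: "span a b = span c t"
  then have "span a b t = Some c"
    using span_apply_right[OF c t ct] by simp
  then obtain u where u: "u \<in> L" "r u = s b" "t = cmp b u" "c = cmp a u"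
    unfolding span_Some_iff[OF a b ab] by blast
  from eq have "span c t b = Some a"
    using span_apply_right[OF a b ab] by simp
  then obtain v where v: "v \<in> L" "r v = s t" "b = cmp t v"
    unfolding span_Some_iff[OF c t ct] by blast
  have "s u = r v"
    using b u(1-3) v(2) by simp
  have "cmp b (cmp u v) = cmp (cmp b u) v"
    by (rule comp_assoc[symmetric]) (use b u(1,2) v(1) \<open>s u = r v\<close> in simp_all)
  also have "\<dots> = b"
    using u(3) v(3) by simp
  also have "\<dots> = cmp b (idm (s b))"
    using b by simp
  finally have "cmp u v = idm (s b)"
    by (rule cancel_left[rotated -1]) (use b u(1,2) v(1) \<open>s u = r v\<close> in simp_all)
  then have "cmp u v = idm (r u)"
    using u(2) by simp
  then have "invertible L r s cmp idm u"
    unfolding invertible_def using u(1) v(1) \<open>s u = r v\<close> by blast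
  then show "\<exists>u. invertible L r s cmp idm u \<and> r u = s a \<and> cmp a u = c \<and> cmp b u = t"
    using u ab by auto
next
  assume "\<exists>u. invertible L r s cmp idm u \<and> r u = s a \<and> cmp a u = c \<and> cmp b u = t"
  then obtain u where "invertible L r s cmp idm u" "r u = s a" "c = cmp a u" "t = cmp b u"
    by blast
  then show "span a b = span c t"
    using span_comp_invertible[OF a b ab] by simp
qed

end

locale singly_aligned_category = left_cancellative_category +
  assumes singly_aligned: "singly_aligned L r s cmp"
begin

lemma span_comp_span_unaligned:
  assumes "a \<in> L" "b \<in> L" "c \<in> L" "t \<in> L" "s a = s b" "s c = s t"
    and "\<not> (\<exists>\<rho>\<in>L. rset L r s cmp b \<inter> rset L r s cmp c = rset L r s cmp \<rho>)"
  shows "span a b \<circ>\<^sub>m span c t = Map.empty"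
proof -
  have "rset L r s cmp b \<inter> rset L r s cmp c = {}"
    using singly_aligned assms(2,3,7) unfolding singly_aligned_def by blast
  then show ?thesis
    by (rule span_comp_span_disjoint[OF assms(1-6)])
qed

lemma span_comp_span_in_spans:
  assumes a: "a \<in> L" and b: "b \<in> L" and c: "c \<in> L" and t: "t \<in> L"
    and ab: "s a = s b" and ct: "s c = s t"
  shows "span a b \<circ>\<^sub>m span c t \<in> spans \<union> {Map.empty}"
proof (cases "\<exists>\<rho>\<in>L. rset L r s cmp b \<inter> rset L r s cmp c = rset L r s cmp \<rho>")
  case True
  then obtain \<rho> where "\<rho> \<in> L" and inter: "rset L r s cmp b \<inter> rset L r s cmp c = rset L r s cmp \<rho>"
    by blast
  then have "\<rho> \<in> rset L r s cmp b" "\<rho> \<in> rset L r s cmp c"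
    using mem_rset_self by auto
  then obtain b1 c1 where b1: "b1 \<in> L" "r b1 = s b" "\<rho> = cmp b b1"
    and c1: "c1 \<in> L" "r c1 = s c" "\<rho> = cmp c c1"
    unfolding mem_rset_iff by blast
  have "s (cmp a b1) = s (cmp t c1)"
    using a b c t ab ct b1 c1 s_comp[of b b1] s_comp[of c c1] by simp
  moreover have "cmp a b1 \<in> L" "cmp t c1 \<in> L"
    using a t ab ct b1 c1 by simp_all
  ultimately show ?thesis
    using span_comp_span[OF a b c t ab ct b1(1,2) c1(1,2) inter b1(3) c1(3)] by blast
next
  case False
  then show ?thesis
    using span_comp_span_unaligned[OF assms] by simp
qed

lemma S_Lambda_eq:
  "S_Lambda L r s cmp = spans \<union> {Map.empty}"
proof
  show "S_Lambda L r s cmp \<subseteq> spans \<union> {Map.empty}"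
  proof
    fix f assume "f \<in> S_Lambda L r s cmp"
    then show "f \<in> spans \<union> {Map.empty}"
    proof (induction rule: S_Lambda.induct)
      case (gen a)
      then have "E a = span a (idm (s a)) \<and> idm (s a) \<in> L \<and> s a = s (idm (s a))"
        using emb_eq_span_id by simp
      with gen show ?case
        by blast
    next
      case zero
      then show ?case
        by simp
    next
      case (mult f g)
      show ?case
      proof (cases "f = Map.empty \<or> g = Map.empty")
        case True
        then show ?thesis
          by auto
      next
        case False
        then obtain a b c t where "f = span a b" "a \<in> L" "b \<in> L" "s a = s b"
          and "g = span c t" "c \<in> L" "t \<in> L" "s c = s t"
          using mult.IH by blast
        then show ?thesis
          using span_comp_span_in_spans by simp
      qed
    next
      case (inv f)
      show ?case
      proof (cases "f = Map.empty")
        case True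
        then show ?thesis
          by simp
      next
        case False
        then obtain a b where "f = span a b" "a \<in> L" "b \<in> L" "s a = s b"
          using inv.IH by blast
        then have "pinv f = span b a \<and> b \<in> L \<and> a \<in> L \<and> s b = s a"
          using pinv_span by simp
        then show ?thesis
          by blast
      qed
    qed
  qed
  show "spans \<union> {Map.empty} \<subseteq> S_Lambda L r s cmp"
    by (auto intro: S_Lambda.intros)
qed

end

theorem lemma4p11:
  fixes L :: "'m set" and Ob :: "'o set" and r s :: "'m \<Rightarrow> 'o"
    and cmp :: "'m \<Rightarrow> 'm \<Rightarrow> 'm" and idm :: "'o \<Rightarrow> 'm"
  assumes cat: "small_category L Ob r s cmp idm"
    and lc: "left_cancellative L r s cmp"
    and sa: "singly_aligned L r s cmp"
  shows
    "(S_Lambda L r s cmp =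
       {emb L r s cmp a \<circ>\<^sub>m pinv (emb L r s cmp b) | a b. a \<in> L \<and> b \<in> L \<and> s a = s b}
       \<union> {Map.empty})
  \<and> (\<forall>a b c t. a \<in> L \<longrightarrow> b \<in> L \<longrightarrow> c \<in> L \<longrightarrow> t \<in> L \<longrightarrow> s a = s b \<longrightarrow> s c = s t \<longrightarrow>
       ((emb L r s cmp a \<circ>\<^sub>m pinv (emb L r s cmp b) = emb L r s cmp c \<circ>\<^sub>m pinv (emb L r s cmp t))
       \<longleftrightarrow> (\<exists>u. invertible L r s cmp idm u \<and> r u = s a \<and> cmp a u = c \<and> cmp b u = t)))
  \<and> (\<forall>a b c t \<rho> b1 c1. a \<in> L \<longrightarrow> b \<in> L \<longrightarrow> c \<in> L \<longrightarrow> t \<in> L \<longrightarrow> s a = s b \<longrightarrow> s c = s t \<longrightarrow>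
       \<rho> \<in> L \<longrightarrow> b1 \<in> L \<longrightarrow> c1 \<in> L \<longrightarrow> r b1 = s b \<longrightarrow> r c1 = s c \<longrightarrow>
       rset L r s cmp b \<inter> rset L r s cmp c = rset L r s cmp \<rho> \<longrightarrow>
       \<rho> = cmp b b1 \<longrightarrow> \<rho> = cmp c c1 \<longrightarrow>
       (emb L r s cmp a \<circ>\<^sub>m pinv (emb L r s cmp b)) \<circ>\<^sub>m (emb L r s cmp c \<circ>\<^sub>m pinv (emb L r s cmp t))
       = emb L r s cmp (cmp a b1) \<circ>\<^sub>m pinv (emb L r s cmp (cmp t c1)))
  \<and> (\<forall>a b c t. a \<in> L \<longrightarrow> b \<in> L \<longrightarrow> c \<in> L \<longrightarrow> t \<in> L \<longrightarrow> s a = s b \<longrightarrow> s c = s t \<longrightarrow>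
       \<not> (\<exists>\<rho>\<in>L. rset L r s cmp b \<inter> rset L r s cmp c = rset L r s cmp \<rho>) \<longrightarrow>
       (emb L r s cmp a \<circ>\<^sub>m pinv (emb L r s cmp b)) \<circ>\<^sub>m (emb L r s cmp c \<circ>\<^sub>m pinv (emb L r s cmp t))
       = Map.empty)
  \<and> (\<forall>x. x \<in> S_Lambda L r s cmp \<longrightarrow> x \<circ>\<^sub>m (Map.empty :: 'm \<rightharpoonup> 'm) = Map.empty \<and> Map.empty \<circ>\<^sub>m x = Map.empty)"
proof -
  interpret singly_aligned_category L Ob r s cmp idm
    using cat lc sa by unfold_locales
  have "x \<circ>\<^sub>m Map.empty = Map.empty \<and> Map.empty \<circ>\<^sub>m x = Map.empty" for x :: "'m \<rightharpoonup> 'm"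
    by auto
  then show ?thesis
    using S_Lambda_eq span_eq_span_iff span_comp_span span_comp_span_unaligned by blast
qed

end
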